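(* Let $T_1=(Q_1,\Sigma,\Delta,R_1,q_1^0)$ and $T_2=(Q_2,\Delta,\Omega,R_2,q_2^0)$ be top-down tree transducers, let $\hat{T}_1$ be the product construction of $T_1$ and the domain automaton of $T_2$, and let $M$ be the look-ahead transducer constructed from $T_1$ and $T_2$ as described in the context. Let $(q_1,S)$ be a state of $\hat{T}_1$ and $q_2$ a state of $T_2$ with $q_2\in S$. Then for the state $(q_1,S,q_2)$ of $M$, $\text{dom}((q_1,S,q_2))=\text{dom}((q_1,S))$.
   Context: A top-down tree transducer $T=(Q,\Sigma,\Delta,R,q_0)$ has finite state set $Q$, ranked input/output alphabets $\Sigma,\Delta$, initial state $q_0$, and finite rule set $R$ of rules $q(a(x_1,\dots,x_k))\to t$ with $a\in\Sigma_k$ ($\Sigma_k$ = symbols of rank $k$) and $t$ a tree over $\Delta$ whose leaves may additionally be of the form $q'(x_i)$, $q'\in Q$, $i\in[k]$; rules are used as rewrite rules in the usual way; for a state $q$ (of a transducer, with or without look-ahead), $\text{dom}(q)$ is the set of input trees $s$ on which $q$ produces at least one output tree (containing no states). For $q\in Q$, $a\in\Sigma_k$, $\text{rhs}_T(q,a)$ is the set of right-hand sides of rules with left-hand side $q(a(x_1,\dots,x_k))$; for a right-hand side $\xi$ (resp. a set $\Gamma$ of right-hand sides), $\xi[x_i]$ (resp. $\Gamma[x_i]$) is the set of states $q'$ such that $q'(x_i)$ occurs in $\xi$ (resp. in some tree of $\Gamma$). Domain automaton of $T$: the top-down tree automaton (transducer over $\Sigma$ with rules of the form $p(a(x_1,\dots,x_k))\to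 a(p_1(x_1),\dots,p_k(x_k))$) with states all subsets of $Q$, initial state $\{q_0\}$, rules $S(a(x_1,\dots,x_k))\to a(S_1(x_1),\dots,S_k(x_k))$ for every $a\in\Sigma_k$, nonempty $S=\{q_1,\dots,q_n\}\subseteq Q$ and nonempty $\Gamma_j\subseteq\text{rhs}_T(q_j,a)$ ($j\in[n]$), where $S_i=\bigcup_j\Gamma_j[x_i]$, and rules $\emptyset(a(x_1,\dots,x_k))\to a(\emptyset(x_1),\dots,\emptyset(x_k))$ for all $a$; for an automaton state $l$, $\text{dom}(l)$ is the set of trees accepted from $l$. Product construction of transducers $T=(Q,\Sigma,\Delta,R,q_0)$ and $T'=(Q',\Delta,\Omega,R',q'_0)$: the transducer with states $Q\times Q'$, initial state $(q_0,q'_0)$, and, for every rule $q(a(x_1,\dots,x_k))\to\xi$ of $T$, every $p\in Q'$ and every tree $\zeta$ derivable from $p(\xi)$ using rules of $T'$ in which the leaves of $\xi$ of the form $q''(x_i)$ are treated as unrewritable symbols and a state $p'$ applied to such a leaf stays as $p'(q''(x_i))$, the rule $(q,p)(a(x_1,\dots,x_k))\to\zeta'$ (said to be obtained from the rule $q(a(x_1,\dots,x_k))\to\xi$ by translating $\xi$ with $p$), where $\zeta'$ replaces each $p'(q''(x_i))$ by $(q'',p')(x_i)$. A top-down tree transducer with look-ahead is a tuple $(Q,\Sigma,\Delta,R,q_0,B)$ where $B$ is a top-down tree automaton over $\Sigma$ with state set $L$ and rules have the form $q(a(x_1\!:\!l_1,\dots,x_k\!:\!l_k))\to t$ with $l_i\in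 L$; on input $s$, each node $v$ with label $a\in\Sigma_k$ is first relabeled by $\langle a,l_1,\dots,l_k\rangle$ where $l_i\in L$ are such that the $i$-th subtree of $v$ is in $\text{dom}(l_i)$, and the relabeled tree is then processed reading each rule as $q(\langle a,l_1,\dots,l_k\rangle(x_1,\dots,x_k))\to t$. Construction of $M$: let $\hat{T}_1$ be the product construction of $T_1$ and the domain automaton of $T_2$ (states written $(q,S)$ with $q\in Q_1$, $S\subseteq Q_2$), and $N$ the product construction of $\hat{T}_1$ and $T_2$ (states written $(q,S,q')$). The states of $M$ are the $(q,S,q')$ with $q'\in S$; its initial state is $(q_1^0,\{q_2^0\},q_2^0)$; its look-ahead automaton is the domain automaton $\hat{A}$ of $\hat{T}_1$. For every rule $(q,S,q')(a(x_1,\dots,x_k))\to\gamma$ of $N$ involving only such states, obtained from the rule $(q,S)(a(x_1,\dots,x_k))\to\xi$ of $\hat{T}_1$ by translating $\xi$ with $q'$, and for all states $l_1,\dots,l_k$ of $\hat{A}$ with $\xi[x_i]\subseteq l_i$ ($i\in[k]$), $M$ has the rule $(q,S,q')(a(x_1\!:\!l_1,\dots,x_k\!:\!l_k))\to\gamma$. *)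

theory Defs
  imports Main
begin

datatype ('f, 'v) tm = Fun 'f "('f, 'v) tm list" | Var 'v

fun wf_tree :: "('f \<times> nat) set \<Rightarrow> ('f, 'v) tm \<Rightarrow> bool" where
  "wf_tree \<Sigma> (Fun a ts) = ((a, length ts) \<in> \<Sigma> \<and> (\<forall>t\<in>set ts. wf_tree \<Sigma> t))"
| "wf_tree \<Sigma> (Var v) = False"

definition ground :: "('f, 'v) tm \<Rightarrow> bool" where
  "ground t \<longleftrightarrow> set2_tm t = {}"

text \<open>A right-hand side is a tree over the output alphabet whose leaves may be
  \<open>Var (q', i)\<close>, standing for \<open>q'(x_i)\<close>; the variable index \<open>i\<close> is 0-based
  (i.e. \<open>x_1,\<dots>,x_k\<close> are \<open>0,\<dots>,k-1\<close>).  A rule \<open>(q, (a,k), \<xi>)\<close> stands for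
  \<open>q(a(x_1,\<dots>,x_k)) \<rightarrow> \<xi>\<close>.\<close>

record ('q, 'f, 'g) td =
  states :: "'q set"
  inalph :: "('f \<times> nat) set"
  outalph :: "('g \<times> nat) set"
  rules :: "('q \<times> ('f \<times> nat) \<times> ('g, 'q \<times> nat) tm) set"
  init :: 'q

fun wf_rhs :: "('g \<times> nat) set \<Rightarrow> 'q set \<Rightarrow> nat \<Rightarrow> ('g, 'q \<times> nat) tm \<Rightarrow> bool" where
  "wf_rhs \<Delta> Q k (Fun g ts) = ((g, length ts) \<in> \<Delta> \<and> (\<forall>t\<in>set ts. wf_rhs \<Delta> Q k t))"
| "wf_rhs \<Delta> Q k (Var (q, i)) = (q \<in> Q \<and> i < k)"

definition wf_td :: "('q, 'f, 'g) td \<Rightarrow> bool" where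
  "wf_td T \<longleftrightarrow> finite (states T) \<and> finite (inalph T) \<and> finite (outalph T)
     \<and> finite (rules T) \<and> init T \<in> states T
     \<and> (\<forall>(q, (a, k), \<xi>) \<in> rules T. q \<in> states T \<and> (a, k) \<in> inalph T
            \<and> wf_rhs (outalph T) (states T) k \<xi>)"

text \<open>Sentential forms are trees over the output alphabet whose leaves may
  be \<open>Var (q, s)\<close>, standing for \<open>q(s)\<close> with \<open>s\<close> an input tree (which may itself contain
  leaves \<open>Var v\<close>; these are not rewritable).\<close>

definition inst :: "('g, 'q \<times> nat) tm \<Rightarrow> ('f, 'v) tm list \<Rightarrow> ('g, 'q \<times> ('f, 'v) tm) tm" where
  "inst \<xi> ss = map_tm id (\<lambda>(q', i). (q', ss ! i)) \<xi>"

inductive tstep :: "('q \<times> ('f \<times> nat) \<times> ('g, 'q \<times> nat) tm) set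
     \<Rightarrow> ('g, 'q \<times> ('f, 'v) tm) tm \<Rightarrow> ('g, 'q \<times> ('f, 'v) tm) tm \<Rightarrow> bool"
  for R where
  root: "(q, (a, length ss), \<xi>) \<in> R \<Longrightarrow> tstep R (Var (q, Fun a ss)) (inst \<xi> ss)"
| ctxt: "i < length ts \<Longrightarrow> tstep R (ts ! i) t' \<Longrightarrow> tstep R (Fun g ts) (Fun g (ts[i := t']))"

text \<open>\<open>dom(q)\<close>: input trees on which \<open>q\<close> produces at least one output tree (without states).\<close>

definition td_dom :: "('q, 'f, 'g) td \<Rightarrow> 'q \<Rightarrow> ('f, 'v) tm set" where
  "td_dom T q = {s. wf_tree (inalph T) s \<and>
      (\<exists>t. ground t \<and> (tstep (rules T))\<^sup>*\<^sup>* (Var (q, s)) t)}"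

definition rhs_set :: "('q, 'f, 'g) td \<Rightarrow> 'q \<Rightarrow> ('f \<times> nat) \<Rightarrow> ('g, 'q \<times> nat) tm set" where
  "rhs_set T q a = {\<xi>. (q, a, \<xi>) \<in> rules T}"

definition rhs_states :: "('g, 'q \<times> nat) tm \<Rightarrow> nat \<Rightarrow> 'q set" where
  "rhs_states \<xi> i = {q'. (q', i) \<in> set2_tm \<xi>}"

definition domaut :: "('q, 'f, 'g) td \<Rightarrow> ('q set, 'f, 'f) td" where
  "domaut T = \<lparr> states = Pow (states T), inalph = inalph T, outalph = inalph T,
     rules =
       {(S, (a, k), Fun a (map (\<lambda>i. Var ({q'. \<exists>q\<in>S. \<exists>\<xi>\<in>\<Gamma> q. q' \<in> rhs_states \<xi> i}, i)) [0..<k]))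
         | S a k \<Gamma>. (a, k) \<in> inalph T \<and> S \<noteq> {} \<and> S \<subseteq> states T
             \<and> (\<forall>q\<in>S. \<Gamma> q \<noteq> {} \<and> \<Gamma> q \<subseteq> rhs_set T q (a, k))}
       \<union> {({}, (a, k), Fun a (map (\<lambda>i. Var ({}, i)) [0..<k])) | a k. (a, k) \<in> inalph T},
     init = {init T} \<rparr>"

text \<open>Translating a right-hand side \<open>\<xi>\<close> of \<open>T\<close> with a state \<open>p\<close> of \<open>T'\<close>: all trees
  \<open>\<zeta>\<close> derivable from \<open>p(\<xi>)\<close> in which every remaining state occurrence is of the form
  \<open>p'(q''(x_i))\<close>, with \<open>p'(q''(x_i))\<close> then replaced by \<open>(q'',p')(x_i)\<close>.\<close>

definition translate :: "('p, 'g, 'h) td \<Rightarrow> 'p \<Rightarrow> ('g, 'q \<times> nat) tm \<Rightarrow> ('h, ('q \<times> 'p) \<times> nat) tm set" where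
  "translate T' p \<xi> =
     {map_tm id (\<lambda>(p', u). case u of Var (q'', i) \<Rightarrow> ((q'', p'), i) | Fun _ _ \<Rightarrow> undefined) \<zeta>
       | \<zeta>. (tstep (rules T'))\<^sup>*\<^sup>* (Var (p, \<xi>)) \<zeta> \<and> (\<forall>(p', u) \<in> set2_tm \<zeta>. \<exists>q'' i. u = Var (q'', i))}"

definition prod_td :: "('q, 'f, 'g) td \<Rightarrow> ('p, 'g, 'h) td \<Rightarrow> ('q \<times> 'p, 'f, 'h) td" where
  "prod_td T T' = \<lparr> states = states T \<times> states T', inalph = inalph T, outalph = outalph T',
     rules = {((q, p), a, \<zeta>') | q a \<xi> p \<zeta>'. (q, a, \<xi>) \<in> rules T \<and> p \<in> states T'
                                      \<and> \<zeta>' \<in> translate T' p \<xi>},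
     init = (init T, init T') \<rparr>"

text \<open>A rule \<open>(q, ((a, ls), k), t)\<close> stands for \<open>q(a(x_1:l_1,\<dots>,x_k:l_k)) \<rightarrow> t\<close> where
  \<open>ls = [l_1,\<dots>,l_k]\<close>.  The look-ahead automaton is a top-down tree automaton,
  represented as a transducer over \<open>\<Sigma>\<close>.\<close>

record ('q, 'f, 'g, 'l) tdla =
  lstates :: "'q set"
  linalph :: "('f \<times> nat) set"
  loutalph :: "('g \<times> nat) set"
  lrules :: "('q \<times> (('f \<times> 'l list) \<times> nat) \<times> ('g, 'q \<times> nat) tm) set"
  linit :: 'q
  lookahead :: "('l, 'f, 'f) td"

inductive relab :: "('l, 'f, 'f) td \<Rightarrow> ('f, 'v) tm \<Rightarrow> ('f \<times> 'l list, 'v) tm \<Rightarrow> bool"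
  for B where
  "length ls = length ss \<Longrightarrow> (\<forall>i<length ss. ls ! i \<in> states B \<and> ss ! i \<in> td_dom B (ls ! i))
   \<Longrightarrow> list_all2 (relab B) ss ss' \<Longrightarrow> relab B (Fun a ss) (Fun (a, ls) ss')"

definition la_base :: "('q, 'f, 'g, 'l) tdla \<Rightarrow> ('q, 'f \<times> 'l list, 'g) td" where
  "la_base M = \<lparr> states = lstates M,
     inalph = {((a, ls), k) | a ls k. (a, k) \<in> linalph M \<and> length ls = k
                                       \<and> set ls \<subseteq> states (lookahead M)},
     outalph = loutalph M, rules = lrules M, init = linit M \<rparr>"

definition la_dom :: "('q, 'f, 'g, 'l) tdla \<Rightarrow> 'q \<Rightarrow> ('f, 'v) tm set" where
  "la_dom M q = {s. wf_tree (linalph M) s \<and>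
      (\<exists>s'. relab (lookahead M) s s' \<and> s' \<in> td_dom (la_base M) q)}"

definition constrM :: "('q1, 'f, 'g) td \<Rightarrow> ('q2, 'g, 'h) td
    \<Rightarrow> (('q1 \<times> 'q2 set) \<times> 'q2, 'f, 'h, ('q1 \<times> 'q2 set) set) tdla" where
  "constrM T1 T2 = (let T1h = prod_td T1 (domaut T2); A = domaut T1h in
     \<lparr> lstates = {((q, S), q'). (q, S) \<in> states T1h \<and> q' \<in> states T2 \<and> q' \<in> S},
       linalph = inalph T1, loutalph = outalph T2,
       lrules = {(((q, S), q'), ((a, ls), k), \<gamma>) | q S q' a ls k \<xi> \<gamma>.
                   ((q, S), (a, k), \<xi>) \<in> rules T1h \<and> q' \<in> states T2 \<and> q' \<in> S
                   \<and> \<gamma> \<in> translate T2 q' \<xi>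
                   \<and> (\<forall>(((q0, S0), p0), i) \<in> set2_tm \<gamma>. p0 \<in> S0)
                   \<and> length ls = k
                   \<and> (\<forall>i<k. ls ! i \<in> states A \<and> rhs_states \<xi> i \<subseteq> ls ! i)},
       linit = ((init T1, {init T2}), init T2),
       lookahead = A \<rparr>)"

end

theory Submission
  imports Defs
begin

text \<open>Let \<open>P\<close> be the product of \<open>T\<^sub>1\<close> with the domain automaton of \<open>T\<^sub>2\<close>.
  For \<open>\<subseteq>\<close>: the root rule of \<open>M\<close> is a translation of a rule \<open>\<xi>\<close> of \<open>P\<close>, and its
  look-ahead puts the \<open>i\<close>-th subtree into the domain of the domain automaton of \<open>P\<close> from a
  set containing every state that \<open>\<xi>\<close> applies to \<open>x\<^sub>i\<close>; by soundness of the domain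
  automaton the subtree lies in all these domains, so \<open>\<xi>\<close> can be completed.
  For \<open>\<supseteq>\<close>: label every subtree by the set of all states of \<open>P\<close> in whose domain it lies,
  and induct on the input. A rule of \<open>P\<close> at \<open>(q, S)\<close> comes from a run of the domain
  automaton of \<open>T\<^sub>2\<close> from \<open>S\<close>; any \<open>q' \<in> S\<close> can follow that run with rules of \<open>T\<^sub>2\<close>,
  which yields a rule of \<open>M\<close> whose leaves are again states \<open>(q\<^sub>0, S\<^sub>0, p\<^sub>0)\<close> with
  \<open>p\<^sub>0 \<in> S\<^sub>0\<close>.\<close>

subsection \<open>Rewriting of sentential forms\<close>

definition reduces_into :: "('q \<times> ('f \<times> nat) \<times> ('g, 'q \<times> nat) tm) set
    \<Rightarrow> ('g, 'q \<times> ('f, 'v) tm) tm \<Rightarrow> ('q \<times> ('f, 'v) tm) set \<Rightarrow> bool" where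
  "reduces_into R t A \<longleftrightarrow> (\<exists>t'. (tstep R)\<^sup>*\<^sup>* t t' \<and> set2_tm t' \<subseteq> A)"

lemma reduces_into_mono: "reduces_into R t A \<Longrightarrow> A \<subseteq> B \<Longrightarrow> reduces_into R t B"
  unfolding reduces_into_def by blast

lemma set2_tm_inst: "set2_tm (inst \<xi> ss) = (\<lambda>(q, i). (q, ss ! i)) ` set2_tm \<xi>"
  by (simp add: inst_def tm.set_map)

lemma rtranclp_tstep_Var_Var: "(tstep R)\<^sup>*\<^sup>* (Var (q, Var v)) t \<Longrightarrow> t = Var (q, Var v)"
  by (induct rule: rtranclp_induct) (auto elim: tstep.cases)

lemma rtranclp_tstep_Var_Fun:
  "(tstep R)\<^sup>*\<^sup>* (Var (q, Fun a ss)) t \<Longrightarrow>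
     t = Var (q, Fun a ss) \<or> (\<exists>\<xi>. (q, (a, length ss), \<xi>) \<in> R \<and> (tstep R)\<^sup>*\<^sup>* (inst \<xi> ss) t)"
  by (erule converse_rtranclpE) (auto elim!: tstep.cases)

lemma rtranclp_tstep_Fun:
  assumes "(tstep R)\<^sup>*\<^sup>* (Fun g ts) t"
  obtains ts' where "t = Fun g ts'" and "list_all2 (tstep R)\<^sup>*\<^sup>* ts ts'"
  using assms
proof (induct arbitrary: thesis rule: rtranclp_induct)
  case base
  then show ?case by (simp add: list.rel_refl)
next
  case (step t u)
  then obtain ts' where ts': "t = Fun g ts'" "list_all2 (tstep R)\<^sup>*\<^sup>* ts ts'"
    by blast
  from \<open>tstep R t u\<close> obtain i t' where "i < length ts'" "tstep R (ts' ! i) t'"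
    and u: "u = Fun g (ts'[i := t'])"
    unfolding ts'(1) by (cases rule: tstep.cases) auto
  with ts'(2) have "list_all2 (tstep R)\<^sup>*\<^sup>* ts (ts'[i := t'])"
    by (auto simp: list_all2_conv_all_nth nth_list_update)
  with u show ?case by (rule step.prems)
qed

lemma rtranclp_tstep_update:
  assumes "(tstep R)\<^sup>*\<^sup>* t t'" and "i < length ts"
  shows "(tstep R)\<^sup>*\<^sup>* (Fun g (ts[i := t])) (Fun g (ts[i := t']))"
  using assms(1)
proof (induct rule: rtranclp_induct)
  case (step u u')
  have "tstep R (Fun g (ts[i := u])) (Fun g (ts[i := u, i := u']))"
    by (rule tstep.ctxt) (use step assms(2) in auto)
  with step show ?case by simp
qed simp

lemma rtranclp_tstep_args:
  assumes "list_all2 (tstep R)\<^sup>*\<^sup>* ts ts'"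
  shows "(tstep R)\<^sup>*\<^sup>* (Fun g ts) (Fun g ts')"
proof -
  have "(tstep R)\<^sup>*\<^sup>* (Fun g (pre @ ts)) (Fun g (pre @ ts'))" for pre
    using assms
  proof (induct arbitrary: pre rule: list_all2_induct)
    case (Cons t ts u us)
    have "(tstep R)\<^sup>*\<^sup>* (Fun g ((pre @ t # ts)[length pre := t])) (Fun g ((pre @ t # ts)[length pre := u]))"
      using Cons(1) by (rule rtranclp_tstep_update) simp
    moreover have "(tstep R)\<^sup>*\<^sup>* (Fun g ((pre @ [u]) @ ts)) (Fun g ((pre @ [u]) @ us))"
      by (rule Cons(3))
    ultimately show ?case by simp
  qed simp
  from this[of "[]"] show ?thesis by simp
qed

lemma reduces_into_leaves_iff:
  "reduces_into R t A \<longleftrightarrow> (\<forall>v \<in> set2_tm t. reduces_into R (Var v) A)"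
proof (induct t)
  case (Fun g ts)
  show ?case
  proof
    assume "reduces_into R (Fun g ts) A"
    then obtain t' where "(tstep R)\<^sup>*\<^sup>* (Fun g ts) t'" and "set2_tm t' \<subseteq> A"
      unfolding reduces_into_def by blast
    then obtain ts' where "set2_tm (Fun g ts') \<subseteq> A" and "list_all2 (tstep R)\<^sup>*\<^sup>* ts ts'"
      by (elim rtranclp_tstep_Fun) blast
    then have "reduces_into R t A" if "t \<in> set ts" for t
      using that unfolding reduces_into_def
      by (fastforce simp: list_all2_conv_all_nth in_set_conv_nth)
    with Fun show "\<forall>v \<in> set2_tm (Fun g ts). reduces_into R (Var v) A" by auto
  next
    assume "\<forall>v \<in> set2_tm (Fun g ts). reduces_into R (Var v) A"
    with Fun have "\<forall>t \<in> set ts. \<exists>t'. (tstep R)\<^sup>*\<^sup>* t t' \<and> set2_tm t' \<subseteq> A"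
      unfolding reduces_into_def by auto
    then obtain f where f: "\<forall>t \<in> set ts. (tstep R)\<^sup>*\<^sup>* t (f t) \<and> set2_tm (f t) \<subseteq> A"
      by metis
    then have "(tstep R)\<^sup>*\<^sup>* (Fun g ts) (Fun g (map f ts))"
      by (intro rtranclp_tstep_args) (auto simp: list_all2_conv_all_nth)
    moreover have "set2_tm (Fun g (map f ts)) \<subseteq> A" using f by auto
    ultimately show "reduces_into R (Fun g ts) A" unfolding reduces_into_def by blast
  qed
qed simp

lemma reduces_into_inst_iff:
  "reduces_into R (inst \<xi> ss) A \<longleftrightarrow> (\<forall>(p, j) \<in> set2_tm \<xi>. reduces_into R (Var (p, ss ! j)) A)"
  by (auto simp: reduces_into_leaves_iff[of R "inst \<xi> ss"] set2_tm_inst)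

lemma reduces_into_Var_Var_iff: "reduces_into R (Var (q, Var v)) A \<longleftrightarrow> (q, Var v) \<in> A"
  by (auto simp: reduces_into_def dest: rtranclp_tstep_Var_Var)

lemma reduces_into_rootI:
  assumes "(q, (a, length ss), \<xi>) \<in> R" and "reduces_into R (inst \<xi> ss) A"
  shows "reduces_into R (Var (q, Fun a ss)) A"
proof -
  have "tstep R (Var (q, Fun a ss)) (inst \<xi> ss)" using assms(1) by (rule tstep.root)
  with assms(2) show ?thesis
    unfolding reduces_into_def by (blast intro: converse_rtranclp_into_rtranclp)
qed

lemma reduces_into_Var_Fun_empty_iff:
  "reduces_into R (Var (q, Fun a ss)) {} \<longleftrightarrow>
     (\<exists>\<xi>. (q, (a, length ss), \<xi>) \<in> R \<and> (\<forall>(p, j) \<in> set2_tm \<xi>. reduces_into R (Var (p, ss ! j)) {}))"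
proof -
  have "reduces_into R (Var (q, Fun a ss)) {} \<longleftrightarrow>
      (\<exists>\<xi>. (q, (a, length ss), \<xi>) \<in> R \<and> reduces_into R (inst \<xi> ss) {})"
    using reduces_into_rootI[of q a ss \<xi> R "{}" for \<xi>]
    by (auto simp: reduces_into_def dest!: rtranclp_tstep_Var_Fun)
  then show ?thesis by (simp add: reduces_into_inst_iff)
qed

subsection \<open>Domains\<close>

definition wf_rules :: "('q, 'f, 'g) td \<Rightarrow> bool" where
  "wf_rules T \<longleftrightarrow> (\<forall>(q, (a, k), \<xi>) \<in> rules T. q \<in> states T \<and> (\<forall>(p, j) \<in> set2_tm \<xi>. j < k))"

lemma wf_rhs_set2_tm: "wf_rhs \<Delta> Q k \<xi> \<Longrightarrow> (p, j) \<in> set2_tm \<xi> \<Longrightarrow> p \<in> Q \<and> j < k"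
  by (induct \<xi> rule: wf_rhs.induct) auto

lemma wf_rulesD:
  "wf_rules T \<Longrightarrow> (q, (a, k), \<xi>) \<in> rules T \<Longrightarrow> q \<in> states T"
  "wf_rules T \<Longrightarrow> (q, (a, k), \<xi>) \<in> rules T \<Longrightarrow> (p, j) \<in> set2_tm \<xi> \<Longrightarrow> j < k"
  unfolding wf_rules_def by fastforce+

lemma tstep_args_set2_tm_subset:
  assumes "wf_rules T" and "tstep (rules T) t t'"
  shows "(\<Union>(p, u) \<in> set2_tm t'. set2_tm u) \<subseteq> (\<Union>(p, u) \<in> set2_tm t. set2_tm u)"
  using assms(2)
proof (induct rule: tstep.induct)
  case (root q a ss \<xi>)
  have "set2_tm (ss ! j) \<subseteq> set2_tm (Fun a ss)" if "(p, j) \<in> set2_tm \<xi>" for p j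
    using wf_rulesD(2)[OF assms(1) root that] by (auto dest: nth_mem)
  then show ?case by (fastforce simp: set2_tm_inst)
next
  case (ctxt i ts t' g)
  then have "set2_tm (ts ! i) \<subseteq> set2_tm (Fun g ts)" by (auto dest: nth_mem)
  with ctxt show ?case by (fastforce dest: set_update_subset_insert[THEN subsetD])
qed

lemma rtranclp_tstep_args_set2_tm_subset:
  assumes "wf_rules T" and "(tstep (rules T))\<^sup>*\<^sup>* t t'"
  shows "(\<Union>(p, u) \<in> set2_tm t'. set2_tm u) \<subseteq> (\<Union>(p, u) \<in> set2_tm t. set2_tm u)"
  using assms(2)
proof (induct rule: rtranclp_induct)
  case (step t' t'')
  from tstep_args_set2_tm_subset[OF assms(1) step(2)] step(3) show ?case by (rule order_trans)
qed simp

lemma td_dom_iff: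
  "s \<in> td_dom T q \<longleftrightarrow> wf_tree (inalph T) s \<and> reduces_into (rules T) (Var (q, s)) {}"
  by (auto simp: td_dom_def ground_def reduces_into_def)

lemma td_dom_Fun_iff:
  assumes "wf_rules T"
  shows "Fun a ss \<in> td_dom T q \<longleftrightarrow> wf_tree (inalph T) (Fun a ss) \<and>
    (\<exists>\<xi>. (q, (a, length ss), \<xi>) \<in> rules T \<and> (\<forall>(p, j) \<in> set2_tm \<xi>. ss ! j \<in> td_dom T p))"
proof -
  have "wf_tree (inalph T) (ss ! j)"
    if "wf_tree (inalph T) (Fun a ss)" "(q, (a, length ss), \<xi>) \<in> rules T" "(p, j) \<in> set2_tm \<xi>"
    for \<xi> p j
    using that wf_rulesD(2)[OF assms that(2,3)] by (auto dest: nth_mem)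
  then show ?thesis
    unfolding td_dom_iff[of _ T] reduces_into_Var_Fun_empty_iff by fastforce
qed

lemma td_dom_Var: "Var v \<notin> td_dom T q"
  by (simp add: td_dom_def)

lemma td_dom_in_states: "wf_rules T \<Longrightarrow> s \<in> td_dom T q \<Longrightarrow> q \<in> states T"
  by (cases s) (auto simp: td_dom_Fun_iff td_dom_Var dest: wf_rulesD(1))

subsection \<open>The domain automaton\<close>

lemma domaut_simps [simp]:
  "states (domaut T) = Pow (states T)" "inalph (domaut T) = inalph T"
  by (simp_all add: domaut_def)

definition child_states :: "'q set \<Rightarrow> ('q \<Rightarrow> ('g, 'q \<times> nat) tm set) \<Rightarrow> nat \<Rightarrow> 'q set" where
  "child_states L \<Gamma> i = {q'. \<exists>q \<in> L. \<exists>\<xi> \<in> \<Gamma> q. q' \<in> rhs_states \<xi> i}"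

lemma domaut_rule_iff:
  "(L, (a, k), \<zeta>) \<in> rules (domaut T) \<longleftrightarrow> (a, k) \<in> inalph T \<and> L \<subseteq> states T \<and>
     (\<exists>\<Gamma>. (\<forall>q \<in> L. \<Gamma> q \<noteq> {} \<and> \<Gamma> q \<subseteq> rhs_set T q (a, k)) \<and>
          \<zeta> = Fun a (map (\<lambda>i. Var (child_states L \<Gamma> i, i)) [0..<k]))"
proof -
  have empty: "child_states {} \<Gamma> = (\<lambda>i. {})" for \<Gamma> :: "'q \<Rightarrow> ('g, 'q \<times> nat) tm set"
    by (simp add: child_states_def fun_eq_iff)
  show ?thesis
    by (cases "L = {}") (auto simp: domaut_def empty, auto simp: child_states_def)
qed

lemma wf_rules_domaut: "wf_rules (domaut T)"
  by (auto simp: wf_rules_def domaut_def)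

lemma td_dom_domautD:
  assumes "wf_rules T"
  shows "s \<in> td_dom (domaut T) L \<Longrightarrow> p \<in> L \<Longrightarrow> s \<in> td_dom T p"
proof (induct s arbitrary: L p)
  case (Fun a ss)
  from Fun.prems(1) obtain \<Gamma> where wf: "wf_tree (inalph T) (Fun a ss)"
    and \<Gamma>: "\<forall>q \<in> L. \<Gamma> q \<noteq> {} \<and> \<Gamma> q \<subseteq> rhs_set T q (a, length ss)"
    and children: "\<forall>i < length ss. ss ! i \<in> td_dom (domaut T) (child_states L \<Gamma> i)"
    unfolding td_dom_Fun_iff[OF wf_rules_domaut] domaut_rule_iff by auto
  from \<Gamma> Fun.prems(2) obtain \<xi> where "\<xi> \<in> \<Gamma> p" and rule: "(p, (a, length ss), \<xi>) \<in> rules T"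
    by (auto simp: rhs_set_def)
  have "ss ! j \<in> td_dom T p'" if "(p', j) \<in> set2_tm \<xi>" for p' j
  proof (rule Fun.hyps)
    have "j < length ss" using wf_rulesD(2)[OF assms rule that] .
    then show "ss ! j \<in> set ss" and "ss ! j \<in> td_dom (domaut T) (child_states L \<Gamma> j)"
      using children by auto
    show "p' \<in> child_states L \<Gamma> j"
      using \<open>\<xi> \<in> \<Gamma> p\<close> Fun.prems(2) that by (auto simp: child_states_def rhs_states_def)
  qed
  with wf rule show ?case by (auto simp: td_dom_Fun_iff[OF assms])
qed (simp add: td_dom_Var)

lemma td_dom_domautI:
  assumes "wf_rules T"
  shows "wf_tree (inalph T) s \<Longrightarrow> L \<subseteq> states T \<Longrightarrow> \<forall>p \<in> L. s \<in> td_dom T p \<Longrightarrow>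
    s \<in> td_dom (domaut T) L"
proof (induct s arbitrary: L)
  case (Fun a ss)
  have "\<forall>p \<in> L. \<exists>\<xi>. (p, (a, length ss), \<xi>) \<in> rules T \<and> (\<forall>(p', j) \<in> set2_tm \<xi>. ss ! j \<in> td_dom T p')"
    using Fun.prems(3) by (simp add: td_dom_Fun_iff[OF assms])
  then obtain \<Xi> where \<Xi>: "\<forall>p \<in> L. (p, (a, length ss), \<Xi> p) \<in> rules T
      \<and> (\<forall>(p', j) \<in> set2_tm (\<Xi> p). ss ! j \<in> td_dom T p')"
    by metis
  define \<Gamma> where "\<Gamma> p = {\<Xi> p}" for p
  have children: "ss ! i \<in> td_dom (domaut T) (child_states L \<Gamma> i)" if "i < length ss" for i
  proof (rule Fun.hyps)
    show "ss ! i \<in> set ss" and "wf_tree (inalph T) (ss ! i)" using that Fun.prems(1) by auto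
    show dom: "\<forall>p' \<in> child_states L \<Gamma> i. ss ! i \<in> td_dom T p'"
      using \<Xi> by (fastforce simp: child_states_def \<Gamma>_def rhs_states_def)
    then show "child_states L \<Gamma> i \<subseteq> states T" using td_dom_in_states[OF assms] by blast
  qed
  have "(L, (a, length ss), Fun a (map (\<lambda>i. Var (child_states L \<Gamma> i, i)) [0..<length ss]))
      \<in> rules (domaut T)"
    using Fun.prems(1,2) \<Xi> unfolding domaut_rule_iff
    by (intro conjI exI[of _ \<Gamma>]) (auto simp: \<Gamma>_def rhs_set_def)
  with children Fun.prems(1) show ?case by (auto simp: td_dom_Fun_iff[OF wf_rules_domaut])
qed simp

subsection \<open>The product with the domain automaton\<close>

definition tr_leaf :: "'p \<times> ('g, 'q \<times> nat) tm \<Rightarrow> ('q \<times> 'p) \<times> nat" where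
  "tr_leaf = (\<lambda>(p', u). case u of Var (q'', i) \<Rightarrow> ((q'', p'), i) | Fun _ _ \<Rightarrow> undefined)"

lemma tr_leaf_Var [simp]: "tr_leaf (p, Var (q, i)) = ((q, p), i)"
  by (simp add: tr_leaf_def)

lemma translate_conv:
  "translate T p \<xi> = {map_tm id tr_leaf \<zeta> | \<zeta>. (tstep (rules T))\<^sup>*\<^sup>* (Var (p, \<xi>)) \<zeta>
     \<and> (\<forall>(p', u) \<in> set2_tm \<zeta>. \<exists>q'' i. u = Var (q'', i))}"
  by (simp add: translate_def tr_leaf_def)

lemma translate_leaf:
  assumes "wf_rules T" and "\<gamma> \<in> translate T p \<xi>" and "((q, p'), i) \<in> set2_tm \<gamma>"
  shows "(q, i) \<in> set2_tm \<xi>"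
proof -
  from assms(2) obtain \<zeta> where \<gamma>: "\<gamma> = map_tm id tr_leaf \<zeta>"
    and steps: "(tstep (rules T))\<^sup>*\<^sup>* (Var (p, \<xi>)) \<zeta>"
    and leaves: "\<forall>(p', u) \<in> set2_tm \<zeta>. \<exists>q'' i. u = Var (q'', i)"
    unfolding translate_conv by blast
  from assms(3) leaves obtain u where "(p', u) \<in> set2_tm \<zeta>" and "u = Var (q, i)"
    by (fastforce simp: \<gamma> tm.set_map)
  have "set2_tm u \<subseteq> (\<Union>(p, u) \<in> set2_tm \<zeta>. set2_tm u)"
    using \<open>(p', u) \<in> set2_tm \<zeta>\<close> by force
  also have "\<dots> \<subseteq> set2_tm \<xi>"
    using rtranclp_tstep_args_set2_tm_subset[OF assms(1) steps] by simp
  finally show ?thesis using \<open>u = Var (q, i)\<close> by simp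
qed

lemma prod_td_simps [simp]:
  "states (prod_td T T') = states T \<times> states T'" "inalph (prod_td T T') = inalph T"
  by (simp_all add: prod_td_def)

lemma wf_rules_prod_td:
  assumes "wf_td T" and "wf_rules T'"
  shows "wf_rules (prod_td T T')"
  unfolding wf_rules_def
proof (clarify)
  fix q p a k \<zeta>
  assume "((q, p), (a, k), \<zeta>) \<in> rules (prod_td T T')"
  then obtain \<xi> where rule: "(q, (a, k), \<xi>) \<in> rules T" and "p \<in> states T'"
    and \<zeta>: "\<zeta> \<in> translate T' p \<xi>"
    by (auto simp: prod_td_def)
  moreover have "q \<in> states T" and wf_rhs: "wf_rhs (outalph T) (states T) k \<xi>"
    using assms(1) rule unfolding wf_td_def by fastforce+
  moreover have "j < k" if "((q', p'), j) \<in> set2_tm \<zeta>" for q' p' j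
    using wf_rhs_set2_tm[OF wf_rhs translate_leaf[OF assms(2) \<zeta> that]] by blast
  ultimately show "(q, p) \<in> states (prod_td T T') \<and> (\<forall>(p', j) \<in> set2_tm \<zeta>. j < k)"
    by auto
qed

lemma domaut_steps_Var_Fun:
  assumes "(tstep (rules (domaut T)))\<^sup>*\<^sup>* (Var (L, Fun a ts)) \<zeta>" and "\<zeta> \<noteq> Var (L, Fun a ts)"
  obtains \<Gamma> \<zeta>s where "\<forall>q \<in> L. \<Gamma> q \<noteq> {} \<and> \<Gamma> q \<subseteq> rhs_set T q (a, length ts)"
    and "\<zeta> = Fun a \<zeta>s" and "length \<zeta>s = length ts"
    and "\<forall>j < length ts. (tstep (rules (domaut T)))\<^sup>*\<^sup>* (Var (child_states L \<Gamma> j, ts ! j)) (\<zeta>s ! j)"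
proof -
  from rtranclp_tstep_Var_Fun[OF assms(1)] assms(2) obtain \<Gamma> where
    \<Gamma>: "\<forall>q \<in> L. \<Gamma> q \<noteq> {} \<and> \<Gamma> q \<subseteq> rhs_set T q (a, length ts)" and
    "(tstep (rules (domaut T)))\<^sup>*\<^sup>* (inst (Fun a (map (\<lambda>i. Var (child_states L \<Gamma> i, i)) [0..<length ts])) ts) \<zeta>"
    unfolding domaut_rule_iff by blast
  then have "(tstep (rules (domaut T)))\<^sup>*\<^sup>* (Fun a (map (\<lambda>i. Var (child_states L \<Gamma> i, ts ! i)) [0..<length ts])) \<zeta>"
    by (simp add: inst_def o_def)
  then obtain \<zeta>s where \<zeta>: "\<zeta> = Fun a \<zeta>s"
    and args: "list_all2 (tstep (rules (domaut T)))\<^sup>*\<^sup>* (map (\<lambda>i. Var (child_states L \<Gamma> i, ts ! i)) [0..<length ts]) \<zeta>s"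
    by (rule rtranclp_tstep_Fun)
  from args have "length \<zeta>s = length ts"
    and "\<forall>j < length ts. (tstep (rules (domaut T)))\<^sup>*\<^sup>* (Var (child_states L \<Gamma> j, ts ! j)) (\<zeta>s ! j)"
    by (auto simp: list_all2_conv_all_nth)
  with \<Gamma> \<zeta> show ?thesis by (rule that)
qed

definition consistent_leaves ::
    "'p set \<Rightarrow> ('g, ('q \<times> 'p set) \<times> nat) tm \<Rightarrow> ('p \<times> ('g, ('q \<times> 'p set) \<times> nat) tm) set" where
  "consistent_leaves P \<xi> = {(p, Var ((q, L), i)) | p q L i. p \<in> L \<and> p \<in> P \<and> ((q, L), i) \<in> set2_tm \<xi>}"

lemma consistent_leaves_mono:
  "set2_tm \<xi> \<subseteq> set2_tm \<xi>' \<Longrightarrow> consistent_leaves P \<xi> \<subseteq> consistent_leaves P \<xi>'"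
  unfolding consistent_leaves_def by blast

text \<open>A run of the domain automaton of \<open>T\<close> from \<open>L\<close> on a right-hand side \<open>\<xi>\<close> annotates
  each leaf of \<open>\<xi>\<close> with the states of \<open>T\<close> that can be applied there.\<close>

lemma domaut_steps_translate:
  fixes T :: "('p, 'g, 'h) td" and \<xi> :: "('g, 'q \<times> nat) tm"
  assumes "wf_td T"
  shows "(tstep (rules (domaut T)))\<^sup>*\<^sup>* (Var (L, \<xi>)) \<zeta> \<Longrightarrow> \<forall>(L', u) \<in> set2_tm \<zeta>. \<exists>v. u = Var v \<Longrightarrow>
    p \<in> L \<Longrightarrow> p \<in> states T \<Longrightarrow>
    reduces_into (rules T) (Var (p, map_tm id tr_leaf \<zeta>))
      (consistent_leaves (states T) (map_tm id tr_leaf \<zeta>))"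
proof (induct \<xi> arbitrary: L \<zeta> p)
  case (Var v)
  obtain q i where "v = (q, i)" by fastforce
  with rtranclp_tstep_Var_Var[OF Var.prems(1)] Var.prems(3,4) show ?case
    by (simp add: reduces_into_Var_Var_iff consistent_leaves_def)
next
  case (Fun a ts)
  have "\<zeta> \<noteq> Var (L, Fun a ts)" using Fun.prems(2) by fastforce
  with Fun.prems(1) obtain \<Gamma> \<zeta>s where
    \<Gamma>: "\<forall>q \<in> L. \<Gamma> q \<noteq> {} \<and> \<Gamma> q \<subseteq> rhs_set T q (a, length ts)"
    and \<zeta>: "\<zeta> = Fun a \<zeta>s" and len: "length \<zeta>s = length ts"
    and args: "\<forall>j < length ts. (tstep (rules (domaut T)))\<^sup>*\<^sup>* (Var (child_states L \<Gamma> j, ts ! j)) (\<zeta>s ! j)"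
    by (rule domaut_steps_Var_Fun)
  from \<Gamma> Fun.prems(3) obtain \<xi> where "\<xi> \<in> \<Gamma> p" and rule: "(p, (a, length ts), \<xi>) \<in> rules T"
    by (auto simp: rhs_set_def)
  define X where "X = map (map_tm id tr_leaf) \<zeta>s"
  have "reduces_into (rules T) (Var (p', X ! j)) (consistent_leaves (states T) (Fun a X))"
    if "(p', j) \<in> set2_tm \<xi>" for p' j
  proof -
    have p': "p' \<in> states T" and j: "j < length ts"
      using wf_rhs_set2_tm[OF _ that] assms rule unfolding wf_td_def by fastforce+
    have "\<zeta>s ! j \<in> set \<zeta>s" using j len by simp
    then have "\<forall>(L', u) \<in> set2_tm (\<zeta>s ! j). \<exists>v. u = Var v"
      using Fun.prems(2) by (auto simp: \<zeta>)
    moreover have "p' \<in> child_states L \<Gamma> j"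
      using \<open>\<xi> \<in> \<Gamma> p\<close> Fun.prems(3) that by (auto simp: child_states_def rhs_states_def)
    ultimately have "reduces_into (rules T) (Var (p', X ! j)) (consistent_leaves (states T) (X ! j))"
      using Fun.hyps[OF nth_mem[OF j] args[rule_format, OF j] _ _ p'] j len by (simp add: X_def id_def)
    moreover have "X ! j \<in> set X" using j len by (simp add: X_def)
    then have "set2_tm (X ! j) \<subseteq> set2_tm (Fun a X)" by auto
    ultimately show ?thesis by (metis reduces_into_mono consistent_leaves_mono)
  qed
  then have "reduces_into (rules T) (Var (p, Fun a X)) (consistent_leaves (states T) (Fun a X))"
    using rule len by (auto simp: X_def reduces_into_inst_iff intro!: reduces_into_rootI)
  then show ?case by (simp add: \<zeta> X_def id_def)
qed

lemma prod_domaut_rule_translate: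
  assumes "wf_td T2" and "((q, S), (a, k), \<xi>) \<in> rules (prod_td T1 (domaut T2))"
    and "q' \<in> S" and "q' \<in> states T2"
  obtains \<gamma> where "\<gamma> \<in> translate T2 q' \<xi>"
    and "\<forall>(((q0, S0), p0), i) \<in> set2_tm \<gamma>. p0 \<in> S0 \<and> p0 \<in> states T2 \<and> ((q0, S0), i) \<in> set2_tm \<xi>"
proof -
  from assms(2) obtain \<xi>1 \<zeta> where \<xi>: "\<xi> = map_tm id tr_leaf \<zeta>"
    and steps: "(tstep (rules (domaut T2)))\<^sup>*\<^sup>* (Var (S, \<xi>1)) \<zeta>"
    and leaves: "\<forall>(p', u) \<in> set2_tm \<zeta>. \<exists>q'' i. u = Var (q'', i)"
    by (auto simp: prod_td_def translate_conv)
  have "reduces_into (rules T2) (Var (q', \<xi>)) (consistent_leaves (states T2) \<xi>)"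
    unfolding \<xi> using domaut_steps_translate[OF assms(1) steps _ assms(3,4)] leaves by fastforce
  then obtain \<zeta>2 where "(tstep (rules T2))\<^sup>*\<^sup>* (Var (q', \<xi>)) \<zeta>2"
    and "set2_tm \<zeta>2 \<subseteq> consistent_leaves (states T2) \<xi>"
    unfolding reduces_into_def by blast
  then show ?thesis
    by (intro that[of "map_tm id tr_leaf \<zeta>2"])
      (fastforce simp: translate_conv consistent_leaves_def tm.set_map)+
qed

subsection \<open>The look-ahead transducer\<close>

lemma la_base_simps [simp]:
  "rules (la_base M) = lrules M"
  "inalph (la_base M) = {((a, ls), k) | a ls k. (a, k) \<in> linalph M \<and> length ls = k
     \<and> set ls \<subseteq> states (lookahead M)}"
  by (simp_all add: la_base_def)

lemma constrM_simps [simp]: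
  "lookahead (constrM T1 T2) = domaut (prod_td T1 (domaut T2))"
  "linalph (constrM T1 T2) = inalph T1"
  by (simp_all add: constrM_def Let_def)

lemma lrules_constrM_iff:
  "(((q, S), q'), ((a, ls), k), \<gamma>) \<in> lrules (constrM T1 T2) \<longleftrightarrow>
    (\<exists>\<xi>. ((q, S), (a, k), \<xi>) \<in> rules (prod_td T1 (domaut T2)) \<and> q' \<in> states T2 \<and> q' \<in> S
      \<and> \<gamma> \<in> translate T2 q' \<xi> \<and> (\<forall>(((q0, S0), p0), i) \<in> set2_tm \<gamma>. p0 \<in> S0) \<and> length ls = k
      \<and> (\<forall>i < k. ls ! i \<in> states (domaut (prod_td T1 (domaut T2))) \<and> rhs_states \<xi> i \<subseteq> ls ! i))"
  unfolding constrM_def Let_def by auto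

definition dom_states :: "('q, 'f, 'g) td \<Rightarrow> ('f, 'v) tm \<Rightarrow> 'q set" where
  "dom_states T t = {p \<in> states T. t \<in> td_dom T p}"

lemma dom_states_subset: "dom_states T t \<subseteq> states T"
  by (simp add: dom_states_def)

fun relabel :: "(('f, 'v) tm \<Rightarrow> 'l) \<Rightarrow> ('f, 'v) tm \<Rightarrow> ('f \<times> 'l list, 'v) tm" where
  "relabel c (Fun a ss) = Fun (a, map c ss) (map (relabel c) ss)"
| "relabel c (Var v) = Var v"

lemma relab_relabel_dom_states:
  assumes "wf_rules T"
  shows "wf_tree (inalph T) s \<Longrightarrow> relab (domaut T) s (relabel (dom_states T) s)"
proof (induct s)
  case (Fun a ss)
  have "t \<in> td_dom (domaut T) (dom_states T t)" if "t \<in> set ss" for t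
    using that Fun.prems by (intro td_dom_domautI[OF assms]) (auto simp: dom_states_def)
  with Fun show ?case
    unfolding relabel.simps
    by (intro relab.intros) (auto simp: dom_states_subset[THEN subsetD] list_all2_conv_all_nth)
qed simp

lemma wf_tree_relabel:
  "wf_tree (linalph M) s \<Longrightarrow> (\<And>t. c t \<in> states (lookahead M)) \<Longrightarrow>
    wf_tree (inalph (la_base M)) (relabel c s)"
  by (induct s) auto

lemma la_dom_constrMD:
  assumes "wf_td T1" and "s \<in> la_dom (constrM T1 T2) ((q, S), q')"
  shows "s \<in> td_dom (prod_td T1 (domaut T2)) (q, S)"
proof -
  let ?T = "prod_td T1 (domaut T2)"
  have wf_T: "wf_rules ?T" using assms(1) wf_rules_domaut by (rule wf_rules_prod_td)
  from assms(2) obtain s' where wf: "wf_tree (inalph T1) s" and relab: "relab (domaut ?T) s s'"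
    and s': "s' \<in> td_dom (la_base (constrM T1 T2)) ((q, S), q')"
    by (auto simp: la_dom_def)
  from relab obtain a ss ls ss' where s: "s = Fun a ss" and s'_eq: "s' = Fun (a, ls) ss'"
    and look: "\<forall>i < length ss. ss ! i \<in> td_dom (domaut ?T) (ls ! i)"
    and "list_all2 (relab (domaut ?T)) ss ss'"
    by (cases rule: relab.cases) blast
  then have "length ss' = length ss" by (simp add: list_all2_lengthD)
  with s' obtain \<gamma> where "(((q, S), q'), ((a, ls), length ss), \<gamma>) \<in> lrules (constrM T1 T2)"
    by (auto simp: s'_eq td_dom_iff reduces_into_Var_Fun_empty_iff)
  then obtain \<xi> where rule: "((q, S), (a, length ss), \<xi>) \<in> rules ?T"
    and guard: "\<forall>i < length ss. rhs_states \<xi> i \<subseteq> ls ! i"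
    unfolding lrules_constrM_iff by blast
  have "ss ! j \<in> td_dom ?T p" if "(p, j) \<in> set2_tm \<xi>" for p j
  proof -
    have "j < length ss" using wf_rulesD(2)[OF wf_T rule that] .
    with guard look that show ?thesis
      by (auto simp: rhs_states_def intro: td_dom_domautD[OF wf_T])
  qed
  with wf rule show ?thesis by (auto simp: s td_dom_Fun_iff[OF wf_T])
qed

lemma constrM_reduces_relabel:
  fixes s :: "('f, 'v) tm"
  assumes "wf_td T1" and "wf_td T2"
  shows "s \<in> td_dom (prod_td T1 (domaut T2)) (q, S) \<Longrightarrow> q' \<in> S \<Longrightarrow> q' \<in> states T2 \<Longrightarrow>
    reduces_into (lrules (constrM T1 T2)) (Var (((q, S), q'), relabel (dom_states (prod_td T1 (domaut T2))) s)) {}"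
proof (induct s arbitrary: q S q')
  case (Fun a ss)
  let ?T = "prod_td T1 (domaut T2)"
  let ?c = "dom_states ?T :: ('f, 'v) tm \<Rightarrow> _"
  have wf_T: "wf_rules ?T" using assms(1) wf_rules_domaut by (rule wf_rules_prod_td)
  from Fun.prems(1) obtain \<xi> where rule: "((q, S), (a, length ss), \<xi>) \<in> rules ?T"
    and children: "\<forall>(p, j) \<in> set2_tm \<xi>. ss ! j \<in> td_dom ?T p"
    by (auto simp: td_dom_Fun_iff[OF wf_T])
  obtain \<gamma> where \<gamma>: "\<gamma> \<in> translate T2 q' \<xi>"
    and leaves: "\<forall>(((q0, S0), p0), i) \<in> set2_tm \<gamma>. p0 \<in> S0 \<and> p0 \<in> states T2 \<and> ((q0, S0), i) \<in> set2_tm \<xi>"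
    using prod_domaut_rule_translate[OF assms(2) rule Fun.prems(2,3)] .
  have "rhs_states \<xi> i \<subseteq> ?c (ss ! i)" if "i < length ss" for i
    using children td_dom_in_states[OF wf_T] by (fastforce simp: rhs_states_def dom_states_def)
  then have "(((q, S), q'), ((a, map ?c ss), length ss), \<gamma>) \<in> lrules (constrM T1 T2)"
    using rule Fun.prems(2,3) \<gamma> leaves unfolding lrules_constrM_iff
    by (intro exI[of _ \<xi>]) (fastforce simp: dom_states_def)
  moreover have "reduces_into (lrules (constrM T1 T2)) (Var (x, map (relabel ?c) ss ! i)) {}"
    if "(x, i) \<in> set2_tm \<gamma>" for x i
  proof -
    from leaves that obtain q0 S0 p0 where x: "x = ((q0, S0), p0)"
      and "((q0, S0), i) \<in> set2_tm \<xi>" and "p0 \<in> S0" and "p0 \<in> states T2"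
      by fast
    moreover from this(2) have "i < length ss" by (rule wf_rulesD(2)[OF wf_T rule])
    ultimately show ?thesis using Fun.hyps children by fastforce
  qed
  ultimately show ?case
    unfolding relabel.simps reduces_into_Var_Fun_empty_iff by fastforce
qed (simp add: td_dom_Var)

lemma la_dom_constrMI:
  fixes s :: "('f, 'v) tm"
  assumes "wf_td T1" and "wf_td T2" and "s \<in> td_dom (prod_td T1 (domaut T2)) (q, S)"
    and "q' \<in> S" and "q' \<in> states T2"
  shows "s \<in> la_dom (constrM T1 T2) ((q, S), q')"
proof -
  let ?T = "prod_td T1 (domaut T2)"
  have wf: "wf_tree (inalph T1) s" using assms(3) by (simp add: td_dom_iff)
  with wf_rules_prod_td[OF assms(1) wf_rules_domaut]
  have "relab (domaut ?T) s (relabel (dom_states ?T) s)"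
    by (intro relab_relabel_dom_states) simp_all
  moreover have "wf_tree (inalph (la_base (constrM T1 T2))) (relabel (dom_states ?T) s)"
    using wf by (intro wf_tree_relabel) (simp_all add: dom_states_subset del: prod_td_simps)
  moreover have "reduces_into (lrules (constrM T1 T2)) (Var (((q, S), q'), relabel (dom_states ?T) s)) {}"
    using constrM_reduces_relabel[OF assms] .
  ultimately show ?thesis
    using wf by (auto simp: la_dom_def td_dom_iff)
qed

theorem lemma16:
  fixes T1 :: "('q1, 'f, 'g) td" and T2 :: "('q2, 'g, 'h) td"
  assumes "wf_td T1" and "wf_td T2" and "outalph T1 = inalph T2"
    and "(q1, S) \<in> states (prod_td T1 (domaut T2))"
    and "q2 \<in> states T2" and "q2 \<in> S"
  shows "(la_dom (constrM T1 T2) ((q1, S), q2) :: ('f, 'v) tm set)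
           = td_dom (prod_td T1 (domaut T2)) (q1, S)"
proof (intro equalityI subsetI)
  show "s \<in> td_dom (prod_td T1 (domaut T2)) (q1, S)"
    if "s \<in> la_dom (constrM T1 T2) ((q1, S), q2)" for s :: "('f, 'v) tm"
    using assms(1) that by (rule la_dom_constrMD)
  show "s \<in> la_dom (constrM T1 T2) ((q1, S), q2)"
    if "s \<in> td_dom (prod_td T1 (domaut T2)) (q1, S)" for s :: "('f, 'v) tm"
    using assms(1,2) that assms(6,5) by (rule la_dom_constrMI)
qed

end
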